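(* Let $1\le s\le d$. Natural data $\bar x$ is uniform on $\{-1,1\}^d$; an augmentation $x\sim\mathcal{A}(\bar x)$ is obtained by sampling independent $\tau_{s+1},\dots,\tau_d\sim\mathrm{Unif}[\tfrac12,1]$, multiplying coordinate $j$ of $\bar x$ by $\tau_j$ for $j=s+1,\dots,d$, and keeping the first $s$ coordinates unchanged. Let $p_{\mathrm{data}}$ be the distribution of $x\sim\mathcal{A}(\bar x)$ and $p_{\mathrm{pos}}$ the distribution of $(x,x^+)$ with $x,x^+\sim\mathcal{A}(\bar x)$ independent given a common $\bar x$. Fix $i\in[s]$ and the downstream label $y(x)=\mathrm{sgn}(x_i)$. For $\lambda>0$ let $\mathcal{L}_\lambda(f)=\mathbb{E}_{(x,x^+)\sim p_{\mathrm{pos}}}[\|f(x)-f(x^+)\|_2^2]+\lambda\|\mathbb{E}_{x\sim p_{\mathrm{data}}}[f(x)f(x)^\top]-\mathbb{I}\|_F^2$. (1) Let $k=s$ and $\mathcal{F}_{\mathrm{linear}}=\{x\mapsto Ux: U\in\mathbb{R}^{k\times d}\}$. For any $\lambda>0$ and any $\hat f\in\arg\min_{f\in\mathcal{F}_{\mathrm{linear}}}\mathcal{L}_\lambda(f)$, there exists $w\in\mathbb{R}^k$ with $\mathbb{E}_{x\sim p_{\mathrm{data}}}[(w^\top\hat f(x)-y(x))^2]=0$. (2) Let $\mathcal{F}_{\mathrm{uni}}$ be the class of all functions $\mathbb{R}^d\to\mathbb{R}^k$. If $k\le2^{d-1}$, then there exists $\hat f'\in\arg\min_{f\in\mathcal{F}_{\mathrm{uni}}}\mathcal{L}_\lambda(f)$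 such that every $w\in\mathbb{R}^k$ satisfies $\mathbb{E}_{x\sim p_{\mathrm{data}}}[(w^\top\hat f'(x)-y(x))^2]\ge1$. *)

theory Defs
  imports "HOL-Probability.Probability"
begin

text \<open>Vectors in R^d are represented as functions nat => real, coordinate j of the
paper corresponds to index j-1 (indices 0..d-1); coordinates >= d are irrelevant.
Embeddings into R^k are functions (nat => real) => (nat => real); only output
coordinates < k are ever used.\<close>

definition cube :: "nat \<Rightarrow> (nat \<Rightarrow> real) set" where
  "cube d = PiE {..<d} (\<lambda>_. {-1, 1})"

definition tau_measure :: "nat \<Rightarrow> nat \<Rightarrow> (nat \<Rightarrow> real) measure" where
  "tau_measure s d = PiM {s..<d} (\<lambda>_. uniform_measure lborel {1/2..1::real})"

definition aug :: "nat \<Rightarrow> nat \<Rightarrow> (nat \<Rightarrow> real) \<Rightarrow> (nat \<Rightarrow> real) \<Rightarrow> (nat \<Rightarrow> real)" where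
  "aug s d xb \<tau> = (\<lambda>j. if j < s then xb j else if j < d then \<tau> j * xb j else 0)"

definition E_data :: "nat \<Rightarrow> nat \<Rightarrow> ((nat \<Rightarrow> real) \<Rightarrow> real) \<Rightarrow> real" where
  "E_data s d g = (\<Sum>xb\<in>cube d. \<integral>\<tau>. g (aug s d xb \<tau>) \<partial>tau_measure s d) / 2 ^ d"

definition E_pos :: "nat \<Rightarrow> nat \<Rightarrow> ((nat \<Rightarrow> real) \<Rightarrow> (nat \<Rightarrow> real) \<Rightarrow> real) \<Rightarrow> real" where
  "E_pos s d g = (\<Sum>xb\<in>cube d.
      \<integral>p. g (aug s d xb (fst p)) (aug s d xb (snd p)) \<partial>(tau_measure s d \<Otimes>\<^sub>M tau_measure s d)) / 2 ^ d"

definition loss :: "nat \<Rightarrow> nat \<Rightarrow> nat \<Rightarrow> real \<Rightarrow> ((nat \<Rightarrow> real) \<Rightarrow> (nat \<Rightarrow> real)) \<Rightarrow> real" where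
  "loss s d k lam f =
     E_pos s d (\<lambda>x x'. \<Sum>j<k. (f x j - f x' j)\<^sup>2)
     + lam * (\<Sum>a<k. \<Sum>b<k. (E_data s d (\<lambda>x. f x a * f x b) - (if a = b then 1 else 0))\<^sup>2)"

definition F_linear :: "nat \<Rightarrow> ((nat \<Rightarrow> real) \<Rightarrow> (nat \<Rightarrow> real)) set" where
  "F_linear d = {f. \<exists>U :: nat \<Rightarrow> nat \<Rightarrow> real. f = (\<lambda>x a. \<Sum>j<d. U a j * x j)}"

text \<open>Universal class: all functions R^d -> R^k for which the loss is well defined,
i.e. each output coordinate is measurable and square integrable under p_data.\<close>
definition F_uni :: "nat \<Rightarrow> nat \<Rightarrow> nat \<Rightarrow> ((nat \<Rightarrow> real) \<Rightarrow> (nat \<Rightarrow> real)) set" where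
  "F_uni s d k = {f. \<forall>xb\<in>cube d. \<forall>j<k.
      (\<lambda>\<tau>. f (aug s d xb \<tau>) j) \<in> borel_measurable (tau_measure s d) \<and>
      integrable (tau_measure s d) (\<lambda>\<tau>. (f (aug s d xb \<tau>) j)\<^sup>2)}"

definition is_argmin :: "('f \<Rightarrow> real) \<Rightarrow> 'f set \<Rightarrow> 'f \<Rightarrow> bool" where
  "is_argmin L F f \<longleftrightarrow> f \<in> F \<and> (\<forall>g\<in>F. L f \<le> L g)"

definition downstream_err ::
  "nat \<Rightarrow> nat \<Rightarrow> nat \<Rightarrow> nat \<Rightarrow> ((nat \<Rightarrow> real) \<Rightarrow> (nat \<Rightarrow> real)) \<Rightarrow> (nat \<Rightarrow> real) \<Rightarrow> real" where
  "downstream_err s d k i f w = E_data s d (\<lambda>x. ((\<Sum>j<k. w j * f x j) - sgn (x i))\<^sup>2)"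

end

theory Submission
  imports Defs "Jordan_Normal_Form.Determinant"
begin

text \<open>
For linear encoders the loss is nonnegative and vanishes at the projection onto the first s
coordinates, so every minimiser has loss zero. At the all-ones point of the cube, zero
alignment loss says that every row of U, read as a linear form in the independent scalings
tau, has zero variance; since each tau has variance 1/48, those rows vanish on the augmented
coordinates. Zero uniformity loss then makes the remaining s x s block orthogonal, and its
i-th column recovers x_i = sgn x_i exactly.

For the universal class, take k distinct parities of the signs of x on sets of coordinates
avoiding i. They are invariant under augmentation (tau > 0) and orthonormal on the cube, so
they have loss zero; but they are all orthogonal to x_i, so every linear read-out has squared
error at least E[x_i^2] = 1.
\<close>

section \<open>Second moments of products and pairs of probability spaces\<close>

lemma (in prob_space) AE_pair_measure_fst_snd:
  assumes "Measurable.pred M P" and "AE x in M. P x"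
  shows "AE p in M \<Otimes>\<^sub>M M. P (fst p) \<and> P (snd p)"
proof -
  interpret M2: pair_prob_space M M ..
  have "{p \<in> space (M \<Otimes>\<^sub>M M). P (fst p) \<and> P (snd p)} \<in> sets (M \<Otimes>\<^sub>M M)"
    using assms(1) by measurable
  moreover have "AE x in M. AE y in M. P x \<and> P y"
    using assms(2) by eventually_elim (use assms(2) in auto)
  ultimately show ?thesis
    by (subst M2.AE_pair_iff[symmetric]) auto
qed

lemma (in prob_space)
  fixes X :: "'a \<Rightarrow> real"
  assumes [measurable]: "X \<in> borel_measurable M" and sq_int: "integrable M (\<lambda>x. (X x)\<^sup>2)"
  shows integrable_pair_square_diff:
      "integrable (M \<Otimes>\<^sub>M M) (\<lambda>p. (X (fst p) - X (snd p))\<^sup>2)"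
    and integral_pair_square_diff:
      "(\<integral>p. (X (fst p) - X (snd p))\<^sup>2 \<partial>(M \<Otimes>\<^sub>M M))
         = 2 * ((\<integral>x. (X x)\<^sup>2 \<partial>M) - (\<integral>x. X x \<partial>M)\<^sup>2)"
proof -
  have int: "integrable M X"
    by (rule square_integrable_imp_integrable[OF assms(1) sq_int])
  define m1 m2 where "m1 = (\<integral>x. X x \<partial>M)" and "m2 = (\<integral>x. (X x)\<^sup>2 \<partial>M)"
  have expand: "(a - X y)\<^sup>2 = a\<^sup>2 - 2 * a * X y + (X y)\<^sup>2" for a y
    by (simp add: power2_diff)
  have inner_int: "integrable M (\<lambda>y. (a - X y)\<^sup>2)" for a
    unfolding expand using int sq_int by auto
  have inner: "(\<integral>y. (a - X y)\<^sup>2 \<partial>M) = a\<^sup>2 - 2 * m1 * a + m2" for a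
    unfolding expand m1_def m2_def using int sq_int by (simp add: prob_space)
  interpret M2: pair_prob_space M M ..
  show pair_int: "integrable (M \<Otimes>\<^sub>M M) (\<lambda>p. (X (fst p) - X (snd p))\<^sup>2)"
  proof (rule M2.Fubini_integrable)
    show "integrable M (\<lambda>x. \<integral>y. norm ((X (fst (x, y)) - X (snd (x, y)))\<^sup>2) \<partial>M)"
      using int sq_int by (simp add: inner)
    show "AE x in M. integrable M (\<lambda>y. (X (fst (x, y)) - X (snd (x, y)))\<^sup>2)"
      by (simp add: inner_int)
  qed measurable
  have "(\<integral>p. (X (fst p) - X (snd p))\<^sup>2 \<partial>(M \<Otimes>\<^sub>M M)) = (\<integral>x. (X x)\<^sup>2 - 2 * m1 * X x + m2 \<partial>M)"
    using M2.integral_fst'[OF pair_int] by (simp add: inner)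
  also have "\<dots> = 2 * (m2 - m1\<^sup>2)"
    using int sq_int by (simp add: m1_def m2_def prob_space power2_eq_square)
  finally show "(\<integral>p. (X (fst p) - X (snd p))\<^sup>2 \<partial>(M \<Otimes>\<^sub>M M)) = 2 * (m2 - m1\<^sup>2)" .
qed

lemma
  fixes N :: "real measure" and g :: "'i \<Rightarrow> real \<Rightarrow> real"
  assumes N: "prob_space N" and I: "finite I" "J \<subseteq> I"
    and g: "\<And>i. i \<in> J \<Longrightarrow> integrable N (g i)"
  shows integrable_PiM_component_prod:
      "integrable (PiM I (\<lambda>_. N)) (\<lambda>\<omega>. \<Prod>i\<in>J. g i (\<omega> i))"
    and integral_PiM_component_prod:
      "(\<integral>\<omega>. (\<Prod>i\<in>J. g i (\<omega> i)) \<partial>PiM I (\<lambda>_. N)) = (\<Prod>i\<in>J. \<integral>t. g i t \<partial>N)"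
proof -
  interpret prob_space N by (fact N)
  interpret product_sigma_finite "\<lambda>_. N"
    by (intro product_sigma_finite.intro prob_space_imp_sigma_finite N)
  define f where "f i t = (if i \<in> J then g i t else 1)" for i t
  have f_int: "integrable N (f i)" for i
    using g by (cases "i \<in> J") (simp_all add: f_def[abs_def])
  have restrict: "(\<Prod>i\<in>I. if i \<in> J then h i else 1) = (\<Prod>i\<in>J. h i)" for h :: "'i \<Rightarrow> real"
    using prod.inter_restrict[OF I(1), of h J] I(2) by (simp add: Int_absorb1)
  have f_prod: "(\<Prod>i\<in>I. f i (\<omega> i)) = (\<Prod>i\<in>J. g i (\<omega> i))" for \<omega>
    using restrict[of "\<lambda>i. g i (\<omega> i)"] by (simp add: f_def)
  show "integrable (PiM I (\<lambda>_. N)) (\<lambda>\<omega>. \<Prod>i\<in>J. g i (\<omega> i))"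
    using product_integrable_prod[OF I(1), where f=f] f_int by (simp add: f_prod)
  have "integral\<^sup>L N (f i) = (if i \<in> J then integral\<^sup>L N (g i) else 1)" for i
    by (cases "i \<in> J") (simp_all add: f_def[abs_def] prob_space)
  then have "(\<Prod>i\<in>I. integral\<^sup>L N (f i)) = (\<Prod>i\<in>J. \<integral>t. g i t \<partial>N)"
    using restrict[of "\<lambda>i. integral\<^sup>L N (g i)"] by simp
  then show "(\<integral>\<omega>. (\<Prod>i\<in>J. g i (\<omega> i)) \<partial>PiM I (\<lambda>_. N)) = (\<Prod>i\<in>J. \<integral>t. g i t \<partial>N)"
    using product_integral_prod[OF I(1), where f=f] f_int by (simp add: f_prod)
qed

lemma
  fixes N :: "real measure"
  assumes N: "prob_space N" "finite I" and int: "integrable N (\<lambda>t. t)" and j: "j \<in> I"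
  shows integrable_PiM_component: "integrable (PiM I (\<lambda>_. N)) (\<lambda>\<omega>. \<omega> j)"
    and integral_PiM_component: "(\<integral>\<omega>. \<omega> j \<partial>PiM I (\<lambda>_. N)) = (\<integral>t. t \<partial>N)"
  using integrable_PiM_component_prod[OF N _ int, of "{j}"]
    integral_PiM_component_prod[OF N _ int, of "{j}"] j
  by simp_all

lemma
  fixes N :: "real measure"
  assumes N: "prob_space N" "finite I"
    and int: "integrable N (\<lambda>t. t)" and sq_int: "integrable N (\<lambda>t. t\<^sup>2)"
    and jl: "j \<in> I" "l \<in> I"
  shows integrable_PiM_component_mult: "integrable (PiM I (\<lambda>_. N)) (\<lambda>\<omega>. \<omega> j * \<omega> l)"
    and integral_PiM_component_mult:
      "(\<integral>\<omega>. \<omega> j * \<omega> l \<partial>PiM I (\<lambda>_. N))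
         = (if j = l then \<integral>t. t\<^sup>2 \<partial>N else (\<integral>t. t \<partial>N)\<^sup>2)"
proof -
  have "integrable (PiM I (\<lambda>_. N)) (\<lambda>\<omega>. \<omega> j * \<omega> l) \<and>
    (\<integral>\<omega>. \<omega> j * \<omega> l \<partial>PiM I (\<lambda>_. N)) = (if j = l then \<integral>t. t\<^sup>2 \<partial>N else (\<integral>t. t \<partial>N)\<^sup>2)"
  proof (cases "j = l")
    case True
    then show ?thesis
      using integrable_PiM_component_prod[OF N _ sq_int, of "{j}"]
        integral_PiM_component_prod[OF N _ sq_int, of "{j}"] jl
      by (simp add: power2_eq_square)
  next
    case False
    then show ?thesis
      using integrable_PiM_component_prod[OF N _ int, of "{j, l}"]
        integral_PiM_component_prod[OF N _ int, of "{j, l}"] jl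
      by (simp add: power2_eq_square)
  qed
  then show "integrable (PiM I (\<lambda>_. N)) (\<lambda>\<omega>. \<omega> j * \<omega> l)"
    and "(\<integral>\<omega>. \<omega> j * \<omega> l \<partial>PiM I (\<lambda>_. N)) = (if j = l then \<integral>t. t\<^sup>2 \<partial>N else (\<integral>t. t \<partial>N)\<^sup>2)"
    by auto
qed

lemma
  fixes N :: "real measure" and c :: "'i \<Rightarrow> real"
  assumes N: "prob_space N" "finite I"
    and int: "integrable N (\<lambda>t. t)" and sq_int: "integrable N (\<lambda>t. t\<^sup>2)"
  shows integrable_PiM_linear_form_square:
      "integrable (PiM I (\<lambda>_. N)) (\<lambda>\<omega>. (\<Sum>j\<in>I. c j * \<omega> j)\<^sup>2)"
    and integral_PiM_linear_form_square:
      "(\<integral>\<omega>. (\<Sum>j\<in>I. c j * \<omega> j)\<^sup>2 \<partial>PiM I (\<lambda>_. N))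
         = (\<integral>t. t \<partial>N)\<^sup>2 * (\<Sum>j\<in>I. c j)\<^sup>2
           + ((\<integral>t. t\<^sup>2 \<partial>N) - (\<integral>t. t \<partial>N)\<^sup>2) * (\<Sum>j\<in>I. (c j)\<^sup>2)"
proof -
  define m1 m2 where "m1 = (\<integral>t. t \<partial>N)" and "m2 = (\<integral>t. t\<^sup>2 \<partial>N)"
  have expand: "(\<Sum>j\<in>I. c j * \<omega> j)\<^sup>2 = (\<Sum>j\<in>I. \<Sum>l\<in>I. (c j * c l) * (\<omega> j * \<omega> l))" for \<omega> :: "'i \<Rightarrow> real"
    by (simp add: power2_eq_square sum_product mult_ac)
  have term_int: "integrable (PiM I (\<lambda>_. N)) (\<lambda>\<omega>. (c j * c l) * (\<omega> j * \<omega> l))"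
    if "j \<in> I" "l \<in> I" for j l
    using integrable_PiM_component_mult[OF N int sq_int that] by simp
  show "integrable (PiM I (\<lambda>_. N)) (\<lambda>\<omega>. (\<Sum>j\<in>I. c j * \<omega> j)\<^sup>2)"
    unfolding expand by (intro Bochner_Integration.integrable_sum term_int)
  have "(\<integral>\<omega>. (\<Sum>j\<in>I. c j * \<omega> j)\<^sup>2 \<partial>PiM I (\<lambda>_. N))
      = (\<Sum>j\<in>I. \<Sum>l\<in>I. \<integral>\<omega>. (c j * c l) * (\<omega> j * \<omega> l) \<partial>PiM I (\<lambda>_. N))"
    unfolding expand
  proof (subst Bochner_Integration.integral_sum)
    show "integrable (PiM I (\<lambda>_. N)) (\<lambda>\<omega>. \<Sum>l\<in>I. (c j * c l) * (\<omega> j * \<omega> l))" if "j \<in> I" for j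
      using that by (auto intro!: Bochner_Integration.integrable_sum term_int)
    then show "(\<Sum>j\<in>I. \<integral>\<omega>. (\<Sum>l\<in>I. (c j * c l) * (\<omega> j * \<omega> l)) \<partial>PiM I (\<lambda>_. N))
      = (\<Sum>j\<in>I. \<Sum>l\<in>I. \<integral>\<omega>. (c j * c l) * (\<omega> j * \<omega> l) \<partial>PiM I (\<lambda>_. N))"
      by (intro sum.cong refl Bochner_Integration.integral_sum)
        (simp_all add: integrable_PiM_component_mult[OF N int sq_int])
  qed
  also have "\<dots> = (\<Sum>j\<in>I. \<Sum>l\<in>I. (c j * c l) * (if j = l then m2 else m1\<^sup>2))"
    by (intro sum.cong refl) (simp add: integral_PiM_component_mult[OF N int sq_int] m1_def m2_def)
  also have "\<dots> = (\<Sum>j\<in>I. \<Sum>l\<in>I. m1\<^sup>2 * (c j * c l) + (if l = j then (m2 - m1\<^sup>2) * (c j)\<^sup>2 else 0))"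
    by (intro sum.cong refl) (auto simp: power2_eq_square algebra_simps)
  also have "\<dots> = m1\<^sup>2 * (\<Sum>j\<in>I. \<Sum>l\<in>I. c j * c l) + (m2 - m1\<^sup>2) * (\<Sum>j\<in>I. (c j)\<^sup>2)"
    using N(2) by (simp add: sum.distrib sum_distrib_left)
  also have "(\<Sum>j\<in>I. \<Sum>l\<in>I. c j * c l) = (\<Sum>j\<in>I. c j)\<^sup>2"
    by (simp add: power2_eq_square sum_product)
  finally show "(\<integral>\<omega>. (\<Sum>j\<in>I. c j * \<omega> j)\<^sup>2 \<partial>PiM I (\<lambda>_. N))
      = m1\<^sup>2 * (\<Sum>j\<in>I. c j)\<^sup>2 + (m2 - m1\<^sup>2) * (\<Sum>j\<in>I. (c j)\<^sup>2)" .
qed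

lemma integral_PiM_linear_form:
  fixes N :: "real measure" and c :: "'i \<Rightarrow> real"
  assumes N: "prob_space N" "finite I" and int: "integrable N (\<lambda>t. t)"
  shows "(\<integral>\<omega>. (\<Sum>j\<in>I. c j * \<omega> j) \<partial>PiM I (\<lambda>_. N)) = (\<Sum>j\<in>I. c j) * (\<integral>t. t \<partial>N)"
proof -
  have "(\<integral>\<omega>. (\<Sum>j\<in>I. c j * \<omega> j) \<partial>PiM I (\<lambda>_. N)) = (\<Sum>j\<in>I. \<integral>\<omega>. c j * \<omega> j \<partial>PiM I (\<lambda>_. N))"
    by (rule Bochner_Integration.integral_sum) (simp add: integrable_PiM_component[OF N int])
  also have "\<dots> = (\<Sum>j\<in>I. c j * (\<integral>t. t \<partial>N))"
    by (intro sum.cong refl) (simp add: integral_PiM_component[OF N int])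
  finally show ?thesis
    by (simp add: sum_distrib_right)
qed

lemma
  fixes N :: "real measure" and c :: "'i \<Rightarrow> real"
  assumes N: "prob_space N" "finite I"
    and int: "integrable N (\<lambda>t. t)" and sq_int: "integrable N (\<lambda>t. t\<^sup>2)"
  defines "L \<equiv> \<lambda>\<omega>. \<Sum>j\<in>I. c j * \<omega> j"
  shows integrable_PiM_pair_linear_form_square_diff:
      "integrable (PiM I (\<lambda>_. N) \<Otimes>\<^sub>M PiM I (\<lambda>_. N)) (\<lambda>p. (L (fst p) - L (snd p))\<^sup>2)"
    and integral_PiM_pair_linear_form_square_diff:
      "(\<integral>p. (L (fst p) - L (snd p))\<^sup>2 \<partial>(PiM I (\<lambda>_. N) \<Otimes>\<^sub>M PiM I (\<lambda>_. N)))
         = 2 * ((\<integral>t. t\<^sup>2 \<partial>N) - (\<integral>t. t \<partial>N)\<^sup>2) * (\<Sum>j\<in>I. (c j)\<^sup>2)"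
proof -
  interpret P: prob_space "PiM I (\<lambda>_. N)"
    using N(1) by (rule prob_space_PiM)
  have "(\<lambda>\<omega>. \<omega> j) \<in> borel_measurable (PiM I (\<lambda>_. N))" if "j \<in> I" for j
    using measurable_compose[OF measurable_component_singleton[OF that] borel_measurable_integrable[OF int]]
    by simp
  then have L_meas: "L \<in> borel_measurable (PiM I (\<lambda>_. N))"
    unfolding L_def by (auto intro!: borel_measurable_sum borel_measurable_times)
  have L_sq: "integrable (PiM I (\<lambda>_. N)) (\<lambda>\<omega>. (L \<omega>)\<^sup>2)"
    unfolding L_def by (rule integrable_PiM_linear_form_square[OF N int sq_int])
  show "integrable (PiM I (\<lambda>_. N) \<Otimes>\<^sub>M PiM I (\<lambda>_. N)) (\<lambda>p. (L (fst p) - L (snd p))\<^sup>2)"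
    by (rule P.integrable_pair_square_diff[OF L_meas L_sq])
  show "(\<integral>p. (L (fst p) - L (snd p))\<^sup>2 \<partial>(PiM I (\<lambda>_. N) \<Otimes>\<^sub>M PiM I (\<lambda>_. N)))
      = 2 * ((\<integral>t. t\<^sup>2 \<partial>N) - (\<integral>t. t \<partial>N)\<^sup>2) * (\<Sum>j\<in>I. (c j)\<^sup>2)"
    unfolding P.integral_pair_square_diff[OF L_meas L_sq]
    unfolding L_def integral_PiM_linear_form_square[OF N int sq_int] integral_PiM_linear_form[OF N int]
    by (simp add: power_mult_distrib algebra_simps)
qed

abbreviation scale_distr :: "real measure" where
  "scale_distr \<equiv> uniform_measure lborel {1/2..1}"

lemma prob_space_scale_distr: "prob_space scale_distr"
  by (rule prob_space_uniform_measure) auto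

lemma AE_scale_distr: "AE t in scale_distr. 1/2 \<le> t \<and> t \<le> 1"
  by (rule AE_uniform_measureI) auto

lemma integral_scale_distr_power:
  "(\<integral>t. t ^ k \<partial>scale_distr) = 2 * (1 - (1/2) ^ Suc k) / Suc k"
proof -
  have "scale_distr = density lborel (\<lambda>t. ennreal (2 * indicator {1/2..1::real} t))"
  proof -
    have "indicator {1/2..1::real} t / ennreal (1/2) = ennreal (2 * indicator {1/2..1::real} t)" for t
      using divide_ennreal[of 1 "1/2"] by (auto simp: indicator_def)
    then show ?thesis
      by (simp add: uniform_measure_def)
  qed
  then have "(\<integral>t. t ^ k \<partial>scale_distr) = (\<integral>t. 2 * (t ^ k * indicator {1/2..1::real} t) \<partial>lborel)"
    by (simp add: integral_density mult_ac)
  then show ?thesis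
    by (simp add: integral_power)
qed

lemma integrable_scale_distr_power: "integrable scale_distr (\<lambda>t. t ^ k)"
proof -
  interpret prob_space scale_distr by (rule prob_space_scale_distr)
  show ?thesis
  proof (rule integrable_const_bound[where B=1])
    show "AE t in scale_distr. norm (t ^ k) \<le> 1"
      using AE_scale_distr by eventually_elim (auto simp: power_abs intro!: power_le_one)
    show "(\<lambda>t. t ^ k) \<in> borel_measurable scale_distr"
      by (simp add: measurable_cong_sets[OF sets_uniform_measure refl])
  qed
qed

lemma integral_scale_distr_variance:
  "(\<integral>t. t\<^sup>2 \<partial>scale_distr) - (\<integral>t. t \<partial>scale_distr)\<^sup>2 = 1/48"
proof -
  have mean: "(\<integral>t. t \<partial>scale_distr) = 3/4"
    using integral_scale_distr_power[of 1] by simp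
  have second_moment: "(\<integral>t. t\<^sup>2 \<partial>scale_distr) = 7/12"
    using integral_scale_distr_power[of 2] by (simp add: power_divide)
  show ?thesis
    unfolding mean second_moment by (simp add: power2_eq_square)
qed

lemma prob_space_tau_measure: "prob_space (tau_measure s d)"
  unfolding tau_measure_def by (intro prob_space_PiM prob_space_scale_distr)

lemma tau_measure_component_measurable[measurable]:
  "j \<in> {s..<d} \<Longrightarrow> (\<lambda>\<tau>. \<tau> j) \<in> borel_measurable (tau_measure s d)"
  unfolding tau_measure_def
  by (rule measurable_compose[OF measurable_component_singleton])
    (simp_all add: measurable_cong_sets[OF sets_uniform_measure refl])

lemma AE_tau_measure_pos: "AE \<tau> in tau_measure s d. \<forall>j\<in>{s..<d}. 0 < \<tau> j"
  unfolding tau_measure_def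
proof (rule AE_finite_allI)
  fix j assume "j \<in> {s..<d}"
  then show "AE \<tau> in PiM {s..<d} (\<lambda>_. scale_distr). 0 < \<tau> j"
    using AE_scale_distr by (intro AE_PiM_component prob_space_scale_distr) auto
qed simp

lemma AE_tau_pair_pos:
  "AE p in tau_measure s d \<Otimes>\<^sub>M tau_measure s d.
     (\<forall>j\<in>{s..<d}. 0 < fst p j) \<and> (\<forall>j\<in>{s..<d}. 0 < snd p j)"
  by (rule prob_space.AE_pair_measure_fst_snd[OF prob_space_tau_measure _ AE_tau_measure_pos])
    measurable

lemma
  shows integrable_tau_pair_linear_form_square_diff:
      "integrable (tau_measure s d \<Otimes>\<^sub>M tau_measure s d)
         (\<lambda>p. ((\<Sum>j\<in>{s..<d}. c j * fst p j) - (\<Sum>j\<in>{s..<d}. c j * snd p j))\<^sup>2)"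
    and integral_tau_pair_linear_form_square_diff:
      "(\<integral>p. ((\<Sum>j\<in>{s..<d}. c j * fst p j) - (\<Sum>j\<in>{s..<d}. c j * snd p j))\<^sup>2
         \<partial>(tau_measure s d \<Otimes>\<^sub>M tau_measure s d)) = (\<Sum>j\<in>{s..<d}. (c j)\<^sup>2) / 24"
  unfolding tau_measure_def
  using integrable_PiM_pair_linear_form_square_diff[OF prob_space_scale_distr _
      integrable_scale_distr_power[of 1, simplified] integrable_scale_distr_power[of 2], of "{s..<d}" c]
    integral_PiM_pair_linear_form_square_diff[OF prob_space_scale_distr _
      integrable_scale_distr_power[of 1, simplified] integrable_scale_distr_power[of 2], of "{s..<d}" c]
  by (simp_all add: integral_scale_distr_variance)

lemma aug_measurable:
  "(\<lambda>\<tau>. aug s d xb \<tau> j) \<in> borel_measurable (tau_measure s d)"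
proof (cases "j \<in> {s..<d}")
  case True
  then have "(\<lambda>\<tau>. aug s d xb \<tau> j) = (\<lambda>\<tau>. \<tau> j * xb j)"
    by (auto simp: aug_def)
  then show ?thesis
    using True by simp
next
  case False
  then have "(\<lambda>\<tau>. aug s d xb \<tau> j) = (\<lambda>_. if j < s then xb j else 0)"
    by (auto simp: aug_def fun_eq_iff)
  then show ?thesis
    by simp
qed

lemma cube_coord: "xb \<in> cube d \<Longrightarrow> j < d \<Longrightarrow> xb j = -1 \<or> xb j = 1"
  unfolding cube_def by (auto simp: PiE_iff)

lemma sgn_aug:
  assumes "xb \<in> cube d" "j < d" "\<forall>l\<in>{s..<d}. 0 < \<tau> l"
  shows "sgn (aug s d xb \<tau> j) = xb j"
proof (cases "j < s")
  case True
  then show ?thesis using cube_coord[OF assms(1,2)] by (auto simp: aug_def)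
next
  case False
  then have "0 < \<tau> j" using assms(2,3) by auto
  then show ?thesis
    using False assms(2) cube_coord[OF assms(1,2)] by (auto simp: aug_def sgn_mult)
qed

lemma sum_aug:
  assumes "s \<le> d"
  shows "(\<Sum>j<d. u j * aug s d xb \<tau> j) = (\<Sum>j<s. u j * xb j) + (\<Sum>j\<in>{s..<d}. (u j * xb j) * \<tau> j)"
proof -
  have "(\<Sum>j<d. u j * aug s d xb \<tau> j) = (\<Sum>j<s. u j * aug s d xb \<tau> j) + (\<Sum>j\<in>{s..<d}. u j * aug s d xb \<tau> j)"
    using sum.atLeastLessThan_concat[of 0 s d "\<lambda>j. u j * aug s d xb \<tau> j"] assms
    by (simp add: atLeast0LessThan)
  then show ?thesis
    by (simp add: aug_def mult_ac)
qed

section \<open>Characters of the cube\<close>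

definition cube_char :: "nat set \<Rightarrow> (nat \<Rightarrow> real) \<Rightarrow> real" where
  "cube_char T x = (\<Prod>j\<in>T. x j)"

lemma finite_cube: "finite (cube d)"
  unfolding cube_def by (rule finite_PiE) auto

lemma sum_cube_prod:
  fixes g :: "nat \<Rightarrow> real \<Rightarrow> real"
  shows "(\<Sum>xb\<in>cube d. \<Prod>j<d. g j (xb j)) = (\<Prod>j<d. g j 1 + g j (-1 :: real))"
proof -
  have "(\<Prod>j<d. g j 1 + g j (-1)) = (\<Prod>j<d. \<Sum>y\<in>{-1, 1::real}. g j y)"
    by (intro prod.cong refl) (simp add: add.commute)
  also have "\<dots> = (\<Sum>xb\<in>cube d. \<Prod>j<d. g j (xb j))"
    using prod_sum_PiE[of "{..<d}" "\<lambda>_. {-1, 1::real}" g] by (simp add: cube_def)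
  finally show ?thesis ..
qed

lemma sum_cube_char_mult:
  assumes "T \<subseteq> {..<d}" "T' \<subseteq> {..<d}"
  shows "(\<Sum>xb\<in>cube d. cube_char T xb * cube_char T' xb) = (if T = T' then 2 ^ d else 0)"
proof -
  define g where "g j y = (if j \<in> T then y else 1) * (if j \<in> T' then y else (1::real))" for j y
  have restrict: "cube_char S xb = (\<Prod>j<d. if j \<in> S then xb j else 1)" if "S \<subseteq> {..<d}" for S xb
    using prod.inter_restrict[of "{..<d}" "\<lambda>j. xb j" S] that
    by (simp add: cube_char_def Int_absorb1)
  have "(\<Sum>xb\<in>cube d. cube_char T xb * cube_char T' xb) = (\<Sum>xb\<in>cube d. \<Prod>j<d. g j (xb j))"
    using assms by (simp add: restrict g_def prod.distrib)
  also have "\<dots> = (\<Prod>j<d. if (j \<in> T) = (j \<in> T') then 2 else 0)"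
    unfolding sum_cube_prod by (intro prod.cong refl) (auto simp: g_def)
  also have "\<dots> = (if T = T' then 2 ^ d else 0)"
  proof (cases "T = T'")
    case False
    then obtain j where "(j \<in> T) \<noteq> (j \<in> T')" by blast
    moreover then have "j < d" using assms by auto
    ultimately show ?thesis using False by (intro trans[OF prod_zero]) auto
  qed simp
  finally show ?thesis .
qed

lemma sum_cube_coord_mult:
  "j < d \<Longrightarrow> l < d \<Longrightarrow> (\<Sum>xb\<in>cube d. xb j * xb l) = (if j = l then 2 ^ d else 0)"
  using sum_cube_char_mult[of "{j}" d "{l}"] by (simp add: cube_char_def)

lemma sum_cube_linear_form_mult:
  assumes "s \<le> d"
  shows "(\<Sum>xb\<in>cube d. (\<Sum>j<s. u j * xb j) * (\<Sum>l<s. v l * xb l)) = 2 ^ d * (\<Sum>j<s. u j * v j)"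
proof -
  have "(\<Sum>xb\<in>cube d. (\<Sum>j<s. u j * xb j) * (\<Sum>l<s. v l * xb l))
      = (\<Sum>xb\<in>cube d. \<Sum>j<s. \<Sum>l<s. (u j * v l) * (xb j * xb l))"
    by (intro sum.cong refl) (simp add: sum_product mult_ac)
  also have "\<dots> = (\<Sum>j<s. \<Sum>l<s. \<Sum>xb\<in>cube d. (u j * v l) * (xb j * xb l))"
    by (rule trans[OF sum.swap], intro sum.cong refl, rule sum.swap)
  also have "\<dots> = (\<Sum>j<s. \<Sum>l<s. (u j * v l) * (\<Sum>xb\<in>cube d. xb j * xb l))"
    by (simp add: sum_distrib_left)
  also have "\<dots> = (\<Sum>j<s. \<Sum>l<s. (u j * v l) * (if j = l then 2 ^ d else 0))"
    using assms by (intro sum.cong refl) (simp add: sum_cube_coord_mult)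
  also have "\<dots> = 2 ^ d * (\<Sum>j<s. u j * v j)"
    by (simp add: if_distrib sum_distrib_left mult_ac cong: if_cong)
  finally show ?thesis .
qed

lemma sum_cube_square_diff_coord_ge:
  assumes "i < d" and orth: "(\<Sum>xb\<in>cube d. g xb * xb i) = 0"
  shows "2 ^ d \<le> (\<Sum>xb\<in>cube d. (g xb - xb i)\<^sup>2)"
proof -
  have "(2 ^ d :: real) = (\<Sum>xb\<in>cube d. xb i * xb i - 2 * (g xb * xb i))"
    using orth sum_cube_coord_mult[OF assms(1) assms(1)]
    by (simp add: sum_subtractf sum_distrib_left[symmetric])
  also have "\<dots> \<le> (\<Sum>xb\<in>cube d. (g xb - xb i)\<^sup>2)"
    by (intro sum_mono) (simp add: power2_eq_square algebra_simps)
  finally show ?thesis .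
qed

lemma E_data_eq_cube_avg:
  assumes "\<And>xb \<tau>. xb \<in> cube d \<Longrightarrow> g (aug s d xb \<tau>) = h xb"
  shows "E_data s d g = (\<Sum>xb\<in>cube d. h xb) / 2 ^ d"
  using assms prob_space.prob_space[OF prob_space_tau_measure]
  by (simp add: E_data_def)

lemma E_data_eq_cube_avg_AE:
  assumes "\<And>xb. xb \<in> cube d \<Longrightarrow> (\<lambda>\<tau>. g (aug s d xb \<tau>)) \<in> borel_measurable (tau_measure s d)"
    and "\<And>xb \<tau>. xb \<in> cube d \<Longrightarrow> \<forall>j\<in>{s..<d}. 0 < \<tau> j \<Longrightarrow> g (aug s d xb \<tau>) = h xb"
  shows "E_data s d g = (\<Sum>xb\<in>cube d. h xb) / 2 ^ d"
  unfolding E_data_def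
proof (intro arg_cong2[where f="(/)"] sum.cong refl)
  fix xb assume xb: "xb \<in> cube d"
  have "AE \<tau> in tau_measure s d. g (aug s d xb \<tau>) = h xb"
    using AE_tau_measure_pos[of s d] by eventually_elim (rule assms(2)[OF xb])
  then have "(\<integral>\<tau>. g (aug s d xb \<tau>) \<partial>tau_measure s d) = (\<integral>\<tau>. h xb \<partial>tau_measure s d)"
    by (intro integral_cong_AE assms(1)[OF xb]) simp_all
  then show "(\<integral>\<tau>. g (aug s d xb \<tau>) \<partial>tau_measure s d) = h xb"
    using prob_space.prob_space[OF prob_space_tau_measure] by simp
qed

lemma E_pos_nonneg: "(\<And>x y. 0 \<le> g x y) \<Longrightarrow> 0 \<le> E_pos s d g"
  unfolding E_pos_def by (intro divide_nonneg_pos sum_nonneg integral_nonneg) auto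

lemma E_pos_eq_0_imp_integral_eq_0:
  assumes "\<And>x y. 0 \<le> g x y" "E_pos s d g = 0" "xb \<in> cube d"
  shows "(\<integral>p. g (aug s d xb (fst p)) (aug s d xb (snd p)) \<partial>(tau_measure s d \<Otimes>\<^sub>M tau_measure s d)) = 0"
proof -
  have "\<forall>xb\<in>cube d.
      (\<integral>p. g (aug s d xb (fst p)) (aug s d xb (snd p)) \<partial>(tau_measure s d \<Otimes>\<^sub>M tau_measure s d)) = 0"
    using assms(1,2) by (subst sum_nonneg_eq_0_iff[OF finite_cube, symmetric])
      (auto simp: E_pos_def intro: integral_nonneg)
  then show ?thesis using assms(3) by blast
qed

lemma loss_nonneg: "0 \<le> lam \<Longrightarrow> 0 \<le> loss s d k lam f"
  unfolding loss_def by (intro add_nonneg_nonneg E_pos_nonneg mult_nonneg_nonneg sum_nonneg) auto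

lemma loss_eq_0_iff:
  assumes "0 < lam"
  shows "loss s d k lam f = 0 \<longleftrightarrow>
    E_pos s d (\<lambda>x x'. \<Sum>j<k. (f x j - f x' j)\<^sup>2) = 0 \<and>
    (\<forall>a<k. \<forall>b<k. E_data s d (\<lambda>x. f x a * f x b) = (if a = b then 1 else 0))"
proof -
  let ?A = "E_pos s d (\<lambda>x x'. \<Sum>j<k. (f x j - f x' j)\<^sup>2)"
  let ?U = "\<Sum>a<k. \<Sum>b<k. (E_data s d (\<lambda>x. f x a * f x b) - (if a = b then 1 else 0))\<^sup>2"
  have "0 \<le> ?A" by (intro E_pos_nonneg sum_nonneg) auto
  moreover have "0 \<le> ?U" by (intro sum_nonneg) auto
  moreover have "?U = 0 \<longleftrightarrow> (\<forall>a<k. \<forall>b<k. E_data s d (\<lambda>x. f x a * f x b) = (if a = b then 1 else 0))"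
    by (auto simp: sum_nonneg_eq_0_iff sum_nonneg)
  ultimately show ?thesis
    using assms by (simp add: loss_def add_nonneg_eq_0_iff)
qed

lemma is_argmin_loss_iff:
  assumes "0 \<le> lam" "g \<in> F" "loss s d k lam g = 0"
  shows "is_argmin (loss s d k lam) F f \<longleftrightarrow> f \<in> F \<and> loss s d k lam f = 0"
  using assms loss_nonneg[OF assms(1)] unfolding is_argmin_def by (metis order.antisym)

section \<open>Linear encoders\<close>

lemma coordinate_projection_in_F_linear:
  "(\<lambda>x a. \<Sum>j<d. of_bool (a = j) * x j) \<in> F_linear d"
  unfolding F_linear_def by (intro CollectI exI[where x="\<lambda>a j. of_bool (a = j)"]) (rule refl)

lemma loss_coordinate_projection:
  assumes "s \<le> d"
  shows "loss s d s lam (\<lambda>x a. \<Sum>j<d. of_bool (a = j) * x j) = 0"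
proof -
  define p :: "(nat \<Rightarrow> real) \<Rightarrow> nat \<Rightarrow> real" where "p = (\<lambda>x a. \<Sum>j<d. of_bool (a = j) * x j)"
  have p_aug: "p (aug s d xb \<tau>) a = xb a" if "a < s" for a xb \<tau>
    using that assms by (simp add: p_def aug_def if_distrib sum.delta cong: if_cong)
  have "E_data s d (\<lambda>x. p x a * p x b) = (if a = b then 1 else 0)" if "a < s" "b < s" for a b
    using that assms
    by (subst E_data_eq_cube_avg[where h="\<lambda>xb. xb a * xb b"]) (simp_all add: p_aug sum_cube_coord_mult)
  then show ?thesis
    unfolding p_def[symmetric] loss_def E_pos_def by (simp add: p_aug)
qed

lemma linear_alignment_eq_0_imp_coeff_eq_0:
  fixes U :: "nat \<Rightarrow> nat \<Rightarrow> real"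
  assumes "s \<le> d" and f: "f = (\<lambda>x a. \<Sum>j<d. U a j * x j)"
    and align: "E_pos s d (\<lambda>x x'. \<Sum>a<k. (f x a - f x' a)\<^sup>2) = 0"
    and "a < k" "j \<in> {s..<d}"
  shows "U a j = 0"
proof -
  define xb0 :: "nat \<Rightarrow> real" where "xb0 = restrict (\<lambda>_. 1) {..<d}"
  have xb0: "xb0 \<in> cube d" by (simp add: xb0_def cube_def)
  define L where "L a \<tau> = (\<Sum>j\<in>{s..<d}. U a j * \<tau> j)" for a \<tau>
  have f_aug: "f (aug s d xb0 \<tau>) a = (\<Sum>j<s. U a j) + L a \<tau>" for a \<tau>
    using assms(1) unfolding f sum_aug[OF assms(1)] L_def by (simp add: xb0_def)
  have "(\<integral>p. (\<Sum>a<k. (L a (fst p) - L a (snd p))\<^sup>2) \<partial>(tau_measure s d \<Otimes>\<^sub>M tau_measure s d)) = 0"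
    using E_pos_eq_0_imp_integral_eq_0[OF _ align xb0] by (simp add: f_aug sum_nonneg)
  moreover have "(\<integral>p. (\<Sum>a<k. (L a (fst p) - L a (snd p))\<^sup>2) \<partial>(tau_measure s d \<Otimes>\<^sub>M tau_measure s d))
      = (\<Sum>a<k. (\<Sum>j\<in>{s..<d}. (U a j)\<^sup>2) / 24)"
    unfolding L_def
    by (simp add: Bochner_Integration.integral_sum integrable_tau_pair_linear_form_square_diff
        integral_tau_pair_linear_form_square_diff)
  ultimately have "(\<Sum>a<k. \<Sum>j\<in>{s..<d}. (U a j)\<^sup>2) = 0"
    by (simp add: sum_divide_distrib[symmetric])
  then have "(\<Sum>j\<in>{s..<d}. (U a j)\<^sup>2) = 0"
    using sum_nonneg_eq_0_iff[of "{..<k}" "\<lambda>a. \<Sum>j\<in>{s..<d}. (U a j)\<^sup>2"] assms(4)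
    by (simp add: sum_nonneg)
  then show ?thesis
    using sum_nonneg_eq_0_iff[of "{s..<d}" "\<lambda>j. (U a j)\<^sup>2"] assms(5) by simp
qed

lemma orthonormal_rows_imp_orthonormal_cols:
  fixes U :: "nat \<Rightarrow> nat \<Rightarrow> real"
  assumes "\<And>a b. a < n \<Longrightarrow> b < n \<Longrightarrow> (\<Sum>j<n. U a j * U b j) = (if a = b then 1 else 0)"
    and "i < n" "j < n"
  shows "(\<Sum>a<n. U a i * U a j) = (if i = j then 1 else 0)"
proof -
  define A where "A = mat n n (\<lambda>(a, j). U a j)"
  have A: "A \<in> carrier_mat n n" "transpose_mat A \<in> carrier_mat n n"
    unfolding A_def by simp_all
  have "A * transpose_mat A = 1\<^sub>m n"
    using assms(1) A by (intro eq_matI) (auto simp: A_def scalar_prod_def atLeast0LessThan)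
  then have "transpose_mat A * A = 1\<^sub>m n"
    by (rule mat_mult_left_right_inverse[OF A])
  then have "(transpose_mat A * A) $$ (i, j) = 1\<^sub>m n $$ (i, j)" by simp
  then show ?thesis
    using assms(2,3) A by (simp add: A_def scalar_prod_def atLeast0LessThan)
qed

lemma orthonormal_rows_readout:
  fixes U :: "nat \<Rightarrow> nat \<Rightarrow> real"
  assumes rows: "\<And>a b. a < n \<Longrightarrow> b < n \<Longrightarrow> (\<Sum>j<n. U a j * U b j) = (if a = b then 1 else 0)"
    and "i < n"
  shows "(\<Sum>a<n. U a i * (\<Sum>j<n. U a j * x j)) = x i"
proof -
  have "(\<Sum>a<n. U a i * (\<Sum>j<n. U a j * x j)) = (\<Sum>a<n. \<Sum>j<n. U a i * U a j * x j)"
    by (simp add: sum_distrib_left mult_ac)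
  also have "\<dots> = (\<Sum>j<n. (\<Sum>a<n. U a i * U a j) * x j)"
    by (subst sum.swap) (simp add: sum_distrib_right)
  also have "\<dots> = (\<Sum>j<n. if i = j then x j else 0)"
    using assms(2) by (intro sum.cong refl) (simp add: orthonormal_rows_imp_orthonormal_cols[OF rows])
  also have "\<dots> = x i"
    using assms(2) by simp
  finally show ?thesis .
qed

lemma linear_minimiser_recovers_label:
  assumes "s \<le> d" "i < s" "0 < lam"
    and am: "is_argmin (loss s d s lam) (F_linear d) f"
  shows "\<exists>w. downstream_err s d s i f w = 0"
proof -
  have "f \<in> F_linear d" and loss0: "loss s d s lam f = 0"
    using am is_argmin_loss_iff[OF _ coordinate_projection_in_F_linear loss_coordinate_projection]
      assms(1,3) by auto
  from \<open>f \<in> F_linear d\<close> obtain U :: "nat \<Rightarrow> nat \<Rightarrow> real" where f: "f = (\<lambda>x a. \<Sum>j<d. U a j * x j)"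
    unfolding F_linear_def by blast
  note zero = loss0[unfolded loss_eq_0_iff[OF assms(3)]]
  have f_aug: "f (aug s d xb \<tau>) a = (\<Sum>j<s. U a j * xb j)" if "a < s" for xb \<tau> a
    using linear_alignment_eq_0_imp_coeff_eq_0[OF assms(1) f conjunct1[OF zero] that]
    by (simp add: f sum_aug[OF assms(1)])
  have rows: "(\<Sum>j<s. U a j * U b j) = (if a = b then 1 else 0)" if "a < s" "b < s" for a b
  proof -
    have "E_data s d (\<lambda>x. f x a * f x b) = (\<Sum>j<s. U a j * U b j)"
      using that assms(1)
      by (subst E_data_eq_cube_avg[where h="\<lambda>xb. (\<Sum>j<s. U a j * xb j) * (\<Sum>l<s. U b l * xb l)"])
        (simp_all add: f_aug sum_cube_linear_form_mult)
    then show ?thesis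
      using conjunct2[OF zero] that by simp
  qed
  have readout: "(\<Sum>a<s. U a i * f (aug s d xb \<tau>) a) = xb i" for xb \<tau>
    using orthonormal_rows_readout[OF rows assms(2)] by (simp add: f_aug)
  have label: "sgn (aug s d xb \<tau> i) = xb i" if "xb \<in> cube d" for xb \<tau>
    using assms(1,2) cube_coord[OF that, of i] by (auto simp: aug_def)
  have "downstream_err s d s i f (\<lambda>a. U a i) = 0"
    unfolding downstream_err_def
    by (subst E_data_eq_cube_avg[where h="\<lambda>_. 0"]) (simp_all add: readout label)
  then show ?thesis by blast
qed

section \<open>Universal encoders\<close>

definition parity_encoder :: "(nat \<Rightarrow> nat set) \<Rightarrow> (nat \<Rightarrow> real) \<Rightarrow> nat \<Rightarrow> real" where
  "parity_encoder T x a = (\<Prod>j\<in>T a. sgn (x j))"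

lemma parity_encoder_aug:
  assumes "T a \<subseteq> {..<d}" "xb \<in> cube d" "\<forall>j\<in>{s..<d}. 0 < \<tau> j"
  shows "parity_encoder T (aug s d xb \<tau>) a = cube_char (T a) xb"
  unfolding parity_encoder_def cube_char_def using assms
  by (intro prod.cong refl sgn_aug) auto

lemma parity_encoder_aug_measurable:
  "(\<lambda>\<tau>. parity_encoder T (aug s d xb \<tau>) a) \<in> borel_measurable (tau_measure s d)"
  unfolding parity_encoder_def
  by (intro borel_measurable_prod measurable_compose[OF aug_measurable borel_measurable_sgn])

lemma parity_encoder_in_F_uni: "parity_encoder T \<in> F_uni s d k"
  unfolding F_uni_def
proof (intro CollectI ballI allI impI conjI)
  fix xb a
  show meas: "(\<lambda>\<tau>. parity_encoder T (aug s d xb \<tau>) a) \<in> borel_measurable (tau_measure s d)"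
    by (rule parity_encoder_aug_measurable)
  have "\<bar>parity_encoder T x a\<bar> \<le> 1" for x
    unfolding parity_encoder_def abs_prod by (intro prod_le_1) (auto simp: sgn_real_def)
  then show "integrable (tau_measure s d) (\<lambda>\<tau>. (parity_encoder T (aug s d xb \<tau>) a)\<^sup>2)"
    using meas
    by (intro finite_measure.integrable_const_bound[where B=1] prob_space.finite_measure
        prob_space_tau_measure) (auto simp: abs_square_le_1)
qed

lemma loss_parity_encoder:
  assumes "inj_on T {..<k}" "\<And>a. a < k \<Longrightarrow> T a \<subseteq> {..<d}"
  shows "loss s d k lam (parity_encoder T) = 0"
proof -
  have "(\<integral>p. (\<Sum>a<k. (parity_encoder T (aug s d xb (fst p)) a - parity_encoder T (aug s d xb (snd p)) a)\<^sup>2)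
      \<partial>(tau_measure s d \<Otimes>\<^sub>M tau_measure s d)) = 0" if xb: "xb \<in> cube d" for xb
  proof (rule integral_eq_zero_AE)
    show "AE p in tau_measure s d \<Otimes>\<^sub>M tau_measure s d.
        (\<Sum>a<k. (parity_encoder T (aug s d xb (fst p)) a - parity_encoder T (aug s d xb (snd p)) a)\<^sup>2) = 0"
      using AE_tau_pair_pos[of s d]
      by eventually_elim (simp add: parity_encoder_aug[OF assms(2) xb])
  qed
  then have "E_pos s d (\<lambda>x x'. \<Sum>a<k. (parity_encoder T x a - parity_encoder T x' a)\<^sup>2) = 0"
    unfolding E_pos_def by simp
  moreover have "E_data s d (\<lambda>x. parity_encoder T x a * parity_encoder T x b) = (if a = b then 1 else 0)"
    if "a < k" "b < k" for a b
    using that assms inj_onD[OF assms(1)]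
    by (subst E_data_eq_cube_avg_AE[where h="\<lambda>xb. cube_char (T a) xb * cube_char (T b) xb"])
      (auto intro!: borel_measurable_times parity_encoder_aug_measurable
        simp: parity_encoder_aug sum_cube_char_mult)
  ultimately show ?thesis
    unfolding loss_def by simp
qed

lemma downstream_err_parity_encoder_ge:
  assumes "s \<le> d" "i < s" "\<And>a. a < k \<Longrightarrow> T a \<subseteq> {..<d} \<and> i \<notin> T a"
  shows "1 \<le> downstream_err s d k i (parity_encoder T) w"
proof -
  define g where "g xb = (\<Sum>a<k. w a * cube_char (T a) xb)" for xb
  have "downstream_err s d k i (parity_encoder T) w = (\<Sum>xb\<in>cube d. (g xb - xb i)\<^sup>2) / 2 ^ d"
    unfolding downstream_err_def
  proof (rule E_data_eq_cube_avg_AE)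
    fix xb
    have "(\<lambda>\<tau>. \<Sum>a<k. w a * parity_encoder T (aug s d xb \<tau>) a) \<in> borel_measurable (tau_measure s d)"
      by (intro borel_measurable_sum borel_measurable_times borel_measurable_const
          parity_encoder_aug_measurable)
    moreover have "(\<lambda>\<tau>. sgn (aug s d xb \<tau> i)) \<in> borel_measurable (tau_measure s d)"
      by (rule measurable_compose[OF aug_measurable borel_measurable_sgn])
    ultimately show "(\<lambda>\<tau>. ((\<Sum>a<k. w a * parity_encoder T (aug s d xb \<tau>) a) - sgn (aug s d xb \<tau> i))\<^sup>2)
        \<in> borel_measurable (tau_measure s d)"
      by measurable
  qed (use assms in \<open>auto simp: g_def parity_encoder_aug sgn_aug\<close>)
  moreover have "(\<Sum>xb\<in>cube d. g xb * xb i) = 0"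
  proof -
    have "(\<Sum>xb\<in>cube d. g xb * xb i) = (\<Sum>a<k. w a * (\<Sum>xb\<in>cube d. cube_char (T a) xb * cube_char {i} xb))"
      by (simp add: g_def cube_char_def sum_distrib_left sum_distrib_right mult_ac sum.swap[of _ "cube d"])
    also have "\<dots> = 0"
      using assms by (intro sum.neutral) (auto simp: sum_cube_char_mult)
    finally show ?thesis .
  qed
  then have "2 ^ d \<le> (\<Sum>xb\<in>cube d. (g xb - xb i)\<^sup>2)"
    using assms(1,2) by (intro sum_cube_square_diff_coord_ge) auto
  ultimately show ?thesis by simp
qed

lemma universal_minimiser_fails:
  assumes "s \<le> d" "i < s" "0 < lam" "k \<le> 2 ^ (d - 1)"
  shows "\<exists>f'. is_argmin (loss s d k lam) (F_uni s d k) f' \<and> (\<forall>w. downstream_err s d k i f' w \<ge> 1)"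
proof -
  have "card {..<k} \<le> card (Pow ({..<d} - {i}))"
    using assms by (simp add: card_Pow card_Diff_singleton)
  then obtain T where T: "T ` {..<k} \<subseteq> Pow ({..<d} - {i})" "inj_on T {..<k}"
    using card_le_inj[OF finite_lessThan] by (metis finite_Diff finite_Pow_iff finite_lessThan)
  then have T_sub: "T a \<subseteq> {..<d} \<and> i \<notin> T a" if "a < k" for a
    using that by auto
  have loss0: "loss s d k lam (parity_encoder T) = 0"
    using T(2) T_sub by (intro loss_parity_encoder) auto
  have "is_argmin (loss s d k lam) (F_uni s d k) (parity_encoder T)"
    using is_argmin_loss_iff[OF _ parity_encoder_in_F_uni loss0] assms(3) parity_encoder_in_F_uni loss0
    by simp
  moreover have "\<forall>w. downstream_err s d k i (parity_encoder T) w \<ge> 1"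
    using T_sub assms(1,2) by (intro allI downstream_err_parity_encoder_ge) auto
  ultimately show ?thesis by blast
qed

theorem theorem4:
  fixes s d i :: nat and lam :: real
  assumes "1 \<le> s" and "s \<le> d" and "i < s" and "lam > 0"
  shows "(\<forall>f. is_argmin (loss s d s lam) (F_linear d) f \<longrightarrow>
            (\<exists>w. downstream_err s d s i f w = 0))
       \<and> (\<forall>k. k \<le> 2 ^ (d - 1) \<longrightarrow>
            (\<exists>f'. is_argmin (loss s d k lam) (F_uni s d k) f' \<and>
                  (\<forall>w. downstream_err s d k i f' w \<ge> 1)))"
  using linear_minimiser_recovers_label[OF assms(2-4)] universal_minimiser_fails[OF assms(2-4)]
  by blast

end
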